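(* Let $P$ be an EVM program, let $(\mathcal{X}_{pc})_{pc}$ be the least solution of the addresses equation system $\mathcal{E}(P)$, and let $\xi_P=\bigcup_{m>0}\mathcal{C}_P^m(X_0)$ be the collecting semantics of $P$. For every program point $pc$ and every stack state $\langle n,\sigma\rangle$ such that some pair $\langle S,S'\rangle\in\xi_P$ has $S'=\langle pc,\langle n,\sigma\rangle\rangle$ (equivalently, the program state $\langle pc,\langle n,\sigma\rangle\rangle$ is reachable from $S_0=\langle 0,\langle 0,\sigma_\emptyset\rangle\rangle$ by the transition relation $\Rightarrow$), there exists $s\in dom(\mathcal{X}_{pc})$ such that $\langle n,\sigma\rangle\in\mathcal{X}_{pc}(s)$.
   Context: EVM programs. An EVM program $P\equiv b_0,\dots,b_p$ is a finite sequence of instructions, each located at a program counter (byte offset); $b_{pc}$ denotes the instruction at program counter $pc$, and $size(b)$ is the number of bytes of instruction $b$ (e.g. $size(\texttt{POP})=1$, $size(\texttt{PUSH}x\ v)=x+1$), so the instruction following $b_{pc}$ is at $pc+size(b_{pc})$. Let $Jump=\{\texttt{JUMP},\texttt{JUMPI}\}$, $End=\{\texttt{REVERT},\texttt{STOP},\texttt{INVALID}\}$, and $\mathcal{J}(P)=\{pc\mid b_{pc}\equiv\texttt{JUMPDEST}\}$ (possible jump destinations). Each instruction $b$ other than those treated specially removes $\delta$ items from and then places $\alpha$ items on the stack (written $b^{\delta,\alpha}$). Stack states. A stack state is a pair $\langle n,\sigma\rangle$ where $n\ge 0$ is the number of stack elements (bounded by a fixed constant, the stack has positions $s_0,\dots,s_{n-1}$,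 top $s_{n-1}$) and $\sigma$ is a partial map from positions to finite sets of jump destinations. $\sigma_\emptyset$ is the empty map; $m[x\mapsto y]$ is $m$ updated at $x$; $m\backslash[x_1,\dots,x_k]$ is $m$ with $x_1,\dots,x_k$ removed from the domain. Simplified semantics. Program states are $\langle pc,\langle n,\sigma\rangle\rangle$; the transition relation $\Rightarrow$ is given by: (1) $b_{pc}=\texttt{JUMP}$: $\langle pc,\langle n,\sigma\rangle\rangle\Rightarrow\langle v,\langle n-1,\sigma\backslash[s_{n-1}]\rangle\rangle$ where $\sigma(s_{n-1})=\{v\}$; (2) $b_{pc}=\texttt{JUMPI}$: $\Rightarrow\langle v,\langle n-2,\sigma\backslash[s_{n-1},s_{n-2}]\rangle\rangle$ with $\sigma(s_{n-1})=\{v\}$; (3) $b_{pc}=\texttt{JUMPI}$: $\Rightarrow\langle pc+size(b_{pc}),\langle n-2,\sigma\backslash[s_{n-1},s_{n-2}]\rangle\rangle$; in all remaining rules the new program counter is $pc+size(b_{pc})$ and the new stack state is $\lambda(b_{pc},\langle n,\sigma\rangle)$ defined below, for $b_{pc}\notin Jump\cup End$. No transition exists from $b_{pc}\in End$. Update function $\lambda$ on stack states: $\lambda(\texttt{JUMP},\langle n,\sigma\rangle)=\langle n-1,\sigma\backslash[s_{n-1}]\rangle$; $\lambda(\texttt{JUMPI},\langle n,\sigma\rangle)=\langle n-2,\sigma\backslash[s_{n-1},s_{n-2}]\rangle$; $\lambda(\texttt{PUSH}x\ v,\langle n,\sigma\rangle)=\langle n+1,\sigma[s_n\mapsto\{v\}]\rangle$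 if $v\in\mathcal{J}(P)$ and $\langle n+1,\sigma\rangle$ otherwise; $\lambda(\texttt{DUP}x,\langle n,\sigma\rangle)=\langle n+1,\sigma[s_n\mapsto\sigma(s_{n-x})]\rangle$ if $s_{n-x}\in dom(\sigma)$, else $\langle n+1,\sigma\rangle$; $\lambda(\texttt{SWAP}x,\langle n,\sigma\rangle)=\langle n,\sigma'\rangle$ where $\sigma'$ is $\sigma$ with the contents (defined or undefined) of positions $s_{n-1}$ and $s_{n-x-1}$ exchanged; for any other $b^{\delta,\alpha}\notin End$: $\lambda(b,\langle n,\sigma\rangle)=\langle n-\delta+\alpha,\sigma\backslash[s_{n-1},\dots,s_{n-\delta}]\rangle$. Abstract domain. An abstract state is a partial map $\pi$ from stack states to sets of stack states. $\pi_1\sqsubseteq\pi_2$ iff $dom(\pi_1)\subseteq dom(\pi_2)$ and $\pi_1(s)\subseteq\pi_2(s)$ for all $s\in dom(\pi_1)$; the join is $(\pi_1\sqcup\pi_2)(s)=img(\pi_1,s)\cup img(\pi_2,s)$ on $dom(\pi_1)\cup dom(\pi_2)$, with $img(\pi,s)=\pi(s)$ if $s\in dom(\pi)$ and $\emptyset$ otherwise; the bottom $\pi_\bot$ is the empty map. Transfer function: $\tau(b,\pi)$ has domain $dom(\pi)$ and $\tau(b,\pi)(s)=\{\lambda(b,t)\mid t\in\pi(s)\}$. For a stack state $t$, $idmap(t)$ is the map with domain $\{t\}$ sending $t$ to $\{t\}$. Addresses equation system $\mathcal{E}(P)$: one variable $\mathcal{X}_{pc}$ (an abstract state, describing stack states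 before executing $b_{pc}$, indexed by the entry stack state of the enclosing block) per program point, with constraints: $\mathcal{X}_0\sqsupseteq idmap(\langle 0,\sigma_\emptyset\rangle)$; (1) if $b_{pc}=\texttt{JUMP}$: for all $s\in dom(\mathcal{X}_{pc})$, $\langle n,\sigma\rangle\in\mathcal{X}_{pc}(s)$ and $v\in\sigma(s_{n-1})$, $\mathcal{X}_v\sqsupseteq idmap(\lambda(b_{pc},\langle n,\sigma\rangle))$; (2) if $b_{pc}=\texttt{JUMPI}$: the same constraints, plus $\mathcal{X}_{pc+1}\sqsupseteq idmap(\lambda(b_{pc},\langle n,\sigma\rangle))$ for all such $s,\langle n,\sigma\rangle$; (3) if $b_{pc}\notin End\cup Jump$ and $b_{pc+size(b_{pc})}=\texttt{JUMPDEST}$: $\mathcal{X}_{pc+size(b_{pc})}\sqsupseteq idmap(\lambda(b_{pc},\langle n,\sigma\rangle))$ for all $s\in dom(\mathcal{X}_{pc})$, $\langle n,\sigma\rangle\in\mathcal{X}_{pc}(s)$; (4) otherwise, if $b_{pc}\notin End\cup Jump$: $\mathcal{X}_{pc+size(b_{pc})}\sqsupseteq\tau(b_{pc},\mathcal{X}_{pc})$. The least solution is the pointwise $\sqsubseteq$-least assignment satisfying all constraints. Collecting semantics: $\mathcal{C}_P(X)=\{\langle S,S'\rangle\mid\langle\_,S\rangle\in X\wedge S\Rightarrow S'\}$, $X_0=\{\langle\_,\langle 0,\langle 0,\sigma_\emptyset\rangle\rangle\rangle\}$ (initial configuration), $\xi_P=\bigcup_{m>0}\mathcal{C}_P^m(X_0)$.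 *)

theory Defs
  imports Main
begin

text \<open>JUMP, JUMPI, JUMPDEST, PUSHx v, DUPx, SWAPx and the End
instructions are treated specially; every other instruction is represented
generically by Op delta alpha (it removes delta items and then places alpha
items on the stack); such instructions have size 1.\<close>

datatype instr =
    JUMP | JUMPI | JUMPDEST
  | PUSH nat nat
  | DUP nat
  | SWAP nat
  | REVERT | STOP | INVALID
  | Op nat nat

text \<open>A program maps program counters (byte offsets) to instructions.\<close>
type_synonym program = "nat \<Rightarrow> instr option"

fun isize :: "instr \<Rightarrow> nat" where
  "isize (PUSH x v) = x + 1"
| "isize _ = 1"

definition is_jump :: "instr \<Rightarrow> bool" where
  "is_jump b \<longleftrightarrow> b = JUMP \<or> b = JUMPI"

definition is_end :: "instr \<Rightarrow> bool" where
  "is_end b \<longleftrightarrow> b = REVERT \<or> b = STOP \<or> b = INVALID"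

definition jumpdests :: "program \<Rightarrow> nat set" where
  "jumpdests P = {pc. P pc = Some JUMPDEST}"

text \<open>A stack state is a pair (n, sigma): n is the number of stack elements
(positions s_0 .. s_(n-1), position s_i represented by i) and sigma is a partial
map from positions to sets of jump destinations.\<close>

type_synonym stst = "nat \<times> (nat \<Rightarrow> nat set option)"

fun lam :: "program \<Rightarrow> instr \<Rightarrow> stst \<Rightarrow> stst" where
  "lam P JUMP (n, \<sigma>) = (n - 1, \<sigma>(n - 1 := None))"
| "lam P JUMPI (n, \<sigma>) = (n - 2, \<sigma>(n - 1 := None, n - 2 := None))"
| "lam P (PUSH x v) (n, \<sigma>) =
     (if v \<in> jumpdests P then (n + 1, \<sigma>(n \<mapsto> {v})) else (n + 1, \<sigma>))"
| "lam P (DUP x) (n, \<sigma>) =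
     (if n - x \<in> dom \<sigma> then (n + 1, \<sigma>(n := \<sigma> (n - x))) else (n + 1, \<sigma>))"
| "lam P (SWAP x) (n, \<sigma>) =
     (n, \<sigma>(n - 1 := \<sigma> (n - x - 1), n - x - 1 := \<sigma> (n - 1)))"
| "lam P JUMPDEST (n, \<sigma>) = (n, \<sigma>)"
| "lam P (Op d a) (n, \<sigma>) = (n - d + a, \<sigma> |` (- {n - d..<n}))"
| "lam P REVERT s = s"    \<comment> \<open>never used (End instructions)\<close>
| "lam P STOP s = s"
| "lam P INVALID s = s"

type_synonym pstate = "nat \<times> stst"

inductive step :: "program \<Rightarrow> pstate \<Rightarrow> pstate \<Rightarrow> bool" for P where
  jump: "P pc = Some JUMP \<Longrightarrow> \<sigma> (n - 1) = Some {v} \<Longrightarrow>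
     step P (pc, (n, \<sigma>)) (v, (n - 1, \<sigma>(n - 1 := None)))"
| jumpi_taken: "P pc = Some JUMPI \<Longrightarrow> \<sigma> (n - 1) = Some {v} \<Longrightarrow>
     step P (pc, (n, \<sigma>)) (v, (n - 2, \<sigma>(n - 1 := None, n - 2 := None)))"
| jumpi_next: "P pc = Some JUMPI \<Longrightarrow>
     step P (pc, (n, \<sigma>)) (pc + isize JUMPI, (n - 2, \<sigma>(n - 1 := None, n - 2 := None)))"
| other: "P pc = Some b \<Longrightarrow> \<not> is_jump b \<Longrightarrow> \<not> is_end b \<Longrightarrow>
     step P (pc, t) (pc + isize b, lam P b t)"

definition collect :: "program \<Rightarrow> (pstate \<times> pstate) set \<Rightarrow> (pstate \<times> pstate) set" where
  "collect P X = {(S, S'). (\<exists>S0. (S0, S) \<in> X) \<and> step P S S'}"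

definition init_state :: pstate where
  "init_state = (0, (0, Map.empty))"

definition X0 :: "(pstate \<times> pstate) set" where
  "X0 = {(S, init_state) | S. True}"

definition xi :: "program \<Rightarrow> (pstate \<times> pstate) set" where
  "xi P = (\<Union>m\<in>{m. m > 0}. (collect P ^^ m) X0)"

type_synonym absst = "stst \<Rightarrow> stst set option"

definition img :: "absst \<Rightarrow> stst \<Rightarrow> stst set" where
  "img \<pi> s = (case \<pi> s of Some A \<Rightarrow> A | None \<Rightarrow> {})"

definition abs_le :: "absst \<Rightarrow> absst \<Rightarrow> bool" where
  "abs_le \<pi>1 \<pi>2 \<longleftrightarrow> dom \<pi>1 \<subseteq> dom \<pi>2 \<and> (\<forall>s\<in>dom \<pi>1. the (\<pi>1 s) \<subseteq> the (\<pi>2 s))"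

definition tau :: "program \<Rightarrow> instr \<Rightarrow> absst \<Rightarrow> absst" where
  "tau P b \<pi> = (\<lambda>s. map_option (\<lambda>A. lam P b ` A) (\<pi> s))"

definition idmap :: "stst \<Rightarrow> absst" where
  "idmap t = [t \<mapsto> {t}]"

definition satisfies :: "program \<Rightarrow> (nat \<Rightarrow> absst) \<Rightarrow> bool" where
  "satisfies P X \<longleftrightarrow>
     abs_le (idmap (0, Map.empty)) (X 0)
   \<and> (\<forall>pc s n \<sigma> V v. P pc \<in> {Some JUMP, Some JUMPI} \<longrightarrow> s \<in> dom (X pc) \<longrightarrow>
        (n, \<sigma>) \<in> the (X pc s) \<longrightarrow> \<sigma> (n - 1) = Some V \<longrightarrow> v \<in> V \<longrightarrow>
        abs_le (idmap (lam P (the (P pc)) (n, \<sigma>))) (X v))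
   \<and> (\<forall>pc s t. P pc = Some JUMPI \<longrightarrow> s \<in> dom (X pc) \<longrightarrow> t \<in> the (X pc s) \<longrightarrow>
        abs_le (idmap (lam P JUMPI t)) (X (pc + 1)))
   \<and> (\<forall>pc b. P pc = Some b \<longrightarrow> \<not> is_end b \<longrightarrow> \<not> is_jump b \<longrightarrow>
        (if P (pc + isize b) = Some JUMPDEST
         then (\<forall>s t. s \<in> dom (X pc) \<longrightarrow> t \<in> the (X pc s) \<longrightarrow>
                 abs_le (idmap (lam P b t)) (X (pc + isize b)))
         else abs_le (tau P b (X pc)) (X (pc + isize b))))"

definition least_solution :: "program \<Rightarrow> (nat \<Rightarrow> absst) \<Rightarrow> bool" where
  "least_solution P X \<longleftrightarrow> satisfies P X \<and>
     (\<forall>Y. satisfies P Y \<longrightarrow> (\<forall>pc. abs_le (X pc) (Y pc)))"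

end

theory Submission
  imports Defs
begin

text \<open>Every state reached from the initial state is reached by a finite path of
\<open>\<Rightarrow>\<close>-steps, and the constraints of \<open>\<E>(P)\<close> are exactly what makes
"the stack state at \<open>pc\<close> occurs in some image of \<open>\<X>\<^sub>p\<^sub>c\<close>" invariant under one step:
jump targets and successors that are \<open>JUMPDEST\<close>s receive the new stack state through
\<open>idmap\<close>, all other successors through \<open>\<tau>\<close>, which keeps the entry state \<open>s\<close>.
Induction along the path proves the claim for every solution of \<open>\<E>(P)\<close>.\<close>

definition abs_mem :: "stst \<Rightarrow> absst \<Rightarrow> bool" where
  "abs_mem t \<pi> \<longleftrightarrow> (\<exists>s\<in>dom \<pi>. t \<in> the (\<pi> s))"

lemma abs_mem_mono: "abs_le \<pi>1 \<pi>2 \<Longrightarrow> abs_mem t \<pi>1 \<Longrightarrow> abs_mem t \<pi>2"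
  unfolding abs_le_def abs_mem_def by blast

lemma abs_mem_idmap: "abs_mem t (idmap t)"
  by (simp add: abs_mem_def idmap_def)

lemma abs_mem_if_idmap_le: "abs_le (idmap t) \<pi> \<Longrightarrow> abs_mem t \<pi>"
  using abs_mem_mono abs_mem_idmap by blast

lemma abs_mem_tau: "abs_mem t \<pi> \<Longrightarrow> abs_mem (lam P b t) (tau P b \<pi>)"
  unfolding abs_mem_def tau_def by (force simp: dom_def)

lemma satisfies_step:
  assumes sat: "satisfies P X"
    and mem: "abs_mem t (X pc)"
    and st: "step P (pc, t) (pc', t')"
  shows "abs_mem t' (X pc')"
  using st
proof (cases rule: step.cases)
  case (jump \<sigma> n)
  with sat mem have "abs_le (idmap (lam P JUMP (n, \<sigma>))) (X pc')"
    unfolding satisfies_def abs_mem_def by (metis insertI1 insert_iff option.sel)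
  with jump show ?thesis by (simp add: abs_mem_if_idmap_le)
next
  case (jumpi_taken \<sigma> n)
  with sat mem have "abs_le (idmap (lam P JUMPI (n, \<sigma>))) (X pc')"
    unfolding satisfies_def abs_mem_def by (metis insertI1 insert_iff option.sel)
  with jumpi_taken show ?thesis by (simp add: abs_mem_if_idmap_le)
next
  case (jumpi_next \<sigma> n)
  with sat mem have "abs_le (idmap (lam P JUMPI t)) (X (pc + 1))"
    unfolding satisfies_def abs_mem_def by blast
  with jumpi_next show ?thesis by (simp add: abs_mem_if_idmap_le)
next
  case (other b)
  have constraint: "if P (pc + isize b) = Some JUMPDEST
      then \<forall>s t. s \<in> dom (X pc) \<longrightarrow> t \<in> the (X pc s) \<longrightarrow>
             abs_le (idmap (lam P b t)) (X (pc + isize b))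
      else abs_le (tau P b (X pc)) (X (pc + isize b))"
    using sat other unfolding satisfies_def by blast
  show ?thesis
  proof (cases "P (pc + isize b) = Some JUMPDEST")
    case True
    from mem obtain s where "s \<in> dom (X pc)" "t \<in> the (X pc s)"
      unfolding abs_mem_def by blast
    with constraint[unfolded if_P[OF True]]
    have "abs_le (idmap (lam P b t)) (X (pc + isize b))"
      by blast
    with other show ?thesis by (simp add: abs_mem_if_idmap_le)
  next
    case False
    with constraint have "abs_le (tau P b (X pc)) (X (pc + isize b))" by simp
    with other mem show ?thesis by (metis abs_mem_mono abs_mem_tau)
  qed
qed

lemma satisfies_reachable:
  assumes sat: "satisfies P X"
    and reach: "(step P)\<^sup>*\<^sup>* init_state (pc, t)"
  shows "abs_mem t (X pc)"
  using reach
proof (induction "(pc, t)" arbitrary: pc t rule: rtranclp_induct)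
  case base
  with sat show ?case
    by (simp add: init_state_def satisfies_def abs_mem_if_idmap_le)
next
  case (step S)
  with sat show ?case by (metis satisfies_step surj_pair)
qed

lemma collect_pow_reachable:
  "(S, S') \<in> (collect P ^^ m) X0 \<Longrightarrow> (step P)\<^sup>*\<^sup>* init_state S'"
proof (induction m arbitrary: S S')
  case 0
  then show ?case by (simp add: X0_def)
next
  case (Suc m)
  then obtain S0 where "(S0, S) \<in> (collect P ^^ m) X0" "step P S S'"
    unfolding collect_def by auto
  with Suc.IH show ?case by (meson rtranclp.rtrancl_into_rtrancl)
qed

theorem lemma1:
  fixes P :: program and X :: "nat \<Rightarrow> absst"
    and S :: pstate and pc n :: nat and \<sigma> :: "nat \<Rightarrow> nat set option"
  assumes "least_solution P X"
    and "(S, (pc, (n, \<sigma>))) \<in> xi P"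
  shows "\<exists>s\<in>dom (X pc). (n, \<sigma>) \<in> the (X pc s)"
proof -
  from assms(2) obtain m where "(S, (pc, (n, \<sigma>))) \<in> (collect P ^^ m) X0"
    by (auto simp: xi_def)
  then have "(step P)\<^sup>*\<^sup>* init_state (pc, (n, \<sigma>))"
    by (rule collect_pow_reachable)
  moreover have "satisfies P X"
    using assms(1) by (simp add: least_solution_def)
  ultimately show ?thesis
    using satisfies_reachable abs_mem_def by blast
qed

end
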